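(* Let $\mathcal{H}$ be a Hilbert space of finite dimension $d\ge2$, let $\mathcal{F}(\mathcal{H})\subseteq\mathcal{D}(\mathcal{H})$ be a closed set of free states (not assumed convex), and let $\rho\in\mathcal{D}(\mathcal{H})\setminus\mathcal{F}(\mathcal{H})$. Then there exists a family of channel ensembles $\big(\{p_i,\Lambda_i^{(m)}\}_i\big)_{m=2}^d$ such that \[\min_{\sigma\in\mathcal{F}(\mathcal{H})}\ \max_{m=2,\dots,d}\ \frac{\max_{\{M_i^{(m)}\}_i}p_{\mathrm{succ}}(\{p_i,\Lambda_i^{(m)}\}_i,\{M_i^{(m)}\}_i,\rho^{\otimes m})}{\max_{\{M_i^{(m)}\}_i}p_{\mathrm{succ}}(\{p_i,\Lambda_i^{(m)}\}_i,\{M_i^{(m)}\}_i,\sigma^{\otimes m})}>1.\]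
   Context: $\mathcal{D}(\mathcal{H})$ is the set of density operators on $\mathcal{H}$. A channel ensemble $\{p_i,\Lambda_i^{(m)}\}_i$ is a finite probability distribution $(p_i)_i$ together with quantum channels (completely positive trace-preserving maps) $\Lambda_i^{(m)}$ from operators on $\mathcal{H}^{\otimes m}$ to operators on a common finite-dimensional output space. For a POVM $\{M_i\}_i$ on the output space (same index set) and a state $\omega$ on $\mathcal{H}^{\otimes m}$, the success probability is $p_{\mathrm{succ}}(\{p_i,\Lambda_i^{(m)}\}_i,\{M_i\}_i,\omega)=\sum_ip_i\operatorname{tr}[M_i\Lambda_i^{(m)}(\omega)]$; the maxima are over all such POVMs. *)

theory Defs
  imports "HOL-Analysis.Analysis" "Jordan_Normal_Form.Matrix"
begin

text \<open>Operators on a d-dimensional Hilbert space are represented as d x d complex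
  matrices (Jordan_Normal_Form matrices).  The space H tensor m has dimension d^m.\<close>

definition trace_op :: "complex mat \<Rightarrow> complex" where
  "trace_op A = (\<Sum>i<dim_row A. A $$ (i,i))"

definition hermitian_op :: "nat \<Rightarrow> complex mat \<Rightarrow> bool" where
  "hermitian_op n A \<longleftrightarrow> A \<in> carrier_mat n n \<and>
     (\<forall>i<n. \<forall>j<n. A $$ (i,j) = cnj (A $$ (j,i)))"

definition psd_op :: "nat \<Rightarrow> complex mat \<Rightarrow> bool" where
  "psd_op n A \<longleftrightarrow> hermitian_op n A \<and>
     (\<forall>v :: nat \<Rightarrow> complex. 0 \<le> Re (\<Sum>i<n. \<Sum>j<n. cnj (v i) * A $$ (i,j) * v j))"

definition density_ops :: "nat \<Rightarrow> complex mat set" where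
  "density_ops n = {A. psd_op n A \<and> trace_op A = 1}"

text \<open>Closedness w.r.t. the (unique) Hausdorff vector topology on n x n matrices,
  i.e. entrywise convergence.\<close>
definition closed_ops :: "nat \<Rightarrow> complex mat set \<Rightarrow> bool" where
  "closed_ops n S \<longleftrightarrow> S \<subseteq> carrier_mat n n \<and>
     (\<forall>X A. (\<forall>k. X k \<in> S) \<longrightarrow> A \<in> carrier_mat n n \<longrightarrow>
        (\<forall>i<n. \<forall>j<n. (\<lambda>k. X k $$ (i,j)) \<longlonglongrightarrow> A $$ (i,j)) \<longrightarrow> A \<in> S)"

definition kron :: "complex mat \<Rightarrow> complex mat \<Rightarrow> complex mat" where
  "kron A B = mat (dim_row A * dim_row B) (dim_col A * dim_col B)
     (\<lambda>(i,j). A $$ (i div dim_row B, j div dim_col B) * B $$ (i mod dim_row B, j mod dim_col B))"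

fun tensor_pow :: "nat \<Rightarrow> complex mat \<Rightarrow> complex mat" where
  "tensor_pow 0 A = 1\<^sub>m 1"
| "tensor_pow (Suc m) A = kron A (tensor_pow m A)"

text \<open>The map id_r tensor Phi applied to an (r*n) x (r*n) matrix viewed as an r x r block
  matrix with n x n blocks; the output has k x k blocks.\<close>
definition block_op :: "nat \<Rightarrow> complex mat \<Rightarrow> nat \<Rightarrow> nat \<Rightarrow> complex mat" where
  "block_op n X a b = mat n n (\<lambda>(p,q). X $$ (a*n + p, b*n + q))"

definition ampliate :: "nat \<Rightarrow> nat \<Rightarrow> nat \<Rightarrow> (complex mat \<Rightarrow> complex mat) \<Rightarrow> complex mat \<Rightarrow> complex mat" where
  "ampliate r n k \<Phi> X = mat (r*k) (r*k)
     (\<lambda>(i,j). \<Phi> (block_op n X (i div k) (j div k)) $$ (i mod k, j mod k))"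

definition channel :: "nat \<Rightarrow> nat \<Rightarrow> (complex mat \<Rightarrow> complex mat) \<Rightarrow> bool" where
  "channel n k \<Phi> \<longleftrightarrow>
     (\<forall>A\<in>carrier_mat n n. \<Phi> A \<in> carrier_mat k k) \<and>
     (\<forall>A\<in>carrier_mat n n. \<forall>B\<in>carrier_mat n n. \<Phi> (A + B) = \<Phi> A + \<Phi> B) \<and>
     (\<forall>A\<in>carrier_mat n n. \<forall>c. \<Phi> (c \<cdot>\<^sub>m A) = c \<cdot>\<^sub>m \<Phi> A) \<and>
     (\<forall>A\<in>carrier_mat n n. trace_op (\<Phi> A) = trace_op A) \<and>
     (\<forall>r X. psd_op (r*n) X \<longrightarrow> psd_op (r*k) (ampliate r n k \<Phi> X))"

definition prob_dist :: "'i set \<Rightarrow> ('i \<Rightarrow> real) \<Rightarrow> bool" where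
  "prob_dist I p \<longleftrightarrow> finite I \<and> (\<forall>i\<in>I. 0 \<le> p i) \<and> (\<Sum>i\<in>I. p i) = 1"

definition povm :: "nat \<Rightarrow> 'i set \<Rightarrow> ('i \<Rightarrow> complex mat) \<Rightarrow> bool" where
  "povm k I M \<longleftrightarrow> (\<forall>i\<in>I. psd_op k (M i)) \<and>
     (\<forall>a<k. \<forall>b<k. (\<Sum>i\<in>I. M i $$ (a,b)) = (if a = b then 1 else 0))"

definition p_succ :: "'i set \<Rightarrow> ('i \<Rightarrow> real) \<Rightarrow> ('i \<Rightarrow> complex mat \<Rightarrow> complex mat)
    \<Rightarrow> ('i \<Rightarrow> complex mat) \<Rightarrow> complex mat \<Rightarrow> real" where
  "p_succ I p \<Lambda> M \<omega> = (\<Sum>i\<in>I. p i * Re (trace_op (M i * \<Lambda> i \<omega>)))"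

definition opt_p_succ :: "'i set \<Rightarrow> ('i \<Rightarrow> real) \<Rightarrow> ('i \<Rightarrow> complex mat \<Rightarrow> complex mat)
    \<Rightarrow> nat \<Rightarrow> complex mat \<Rightarrow> real" where
  "opt_p_succ I p \<Lambda> k \<omega> = Sup {p_succ I p \<Lambda> M \<omega> | M. povm k I M}"

end

theory Submission
  imports Defs
begin

text \<open>A rank-one informationally complete POVM on \<open>\<complex>\<^sup>d\<close> (the vectors \<open>e\<^sub>i + \<i>\<^sup>k e\<^sub>j\<close>) maps a
  state \<open>\<omega>\<close> to a probability vector \<open>q(\<omega>)\<close> from which \<open>\<omega>\<close> is recovered linearly. As \<open>F\<close> is
  closed and \<open>\<rho> \<notin> F\<close>, the distance \<open>|q(\<sigma>) - q(\<rho>)|\<^sup>2\<close> is bounded below by some \<open>\<delta> > 0\<close> on \<open>F\<close>.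
  Measure this POVM on both copies of \<open>\<sigma> \<otimes> \<sigma>\<close> and, on outcome \<open>(l, l')\<close>, raise flag 0 with
  probability \<open>1/2 - \<langle>e\<^sub>l - q(\<rho>), e\<^sub>l\<^sub>' - q(\<rho>)\<rangle> / 8\<close>; flag 0 then appears with probability
  \<open>1/2 - |q(\<sigma>) - q(\<rho>)|\<^sup>2 / 8\<close>. Paired with a channel that always raises flag 1, the two
  equiprobable channels are discriminated with optimal success probability
  \<open>3/4 - |q(\<sigma>) - q(\<rho>)|\<^sup>2 / 16\<close>, which is \<open>3/4\<close> for \<open>\<rho>\<close> and at most \<open>3/4 - \<delta>/16\<close> on \<open>F\<close>.
  The channels for \<open>m \<noteq> 2\<close> copies are trivial: the maximum over \<open>m\<close> already sees \<open>m = 2\<close>.\<close>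

definition qform :: "nat \<Rightarrow> (nat \<Rightarrow> complex) \<Rightarrow> complex mat \<Rightarrow> complex" where
  "qform n v A = (\<Sum>i<n. \<Sum>j<n. cnj (v i) * A $$ (i,j) * v j)"

lemma psd_op_iff_qform: "psd_op n A \<longleftrightarrow> hermitian_op n A \<and> (\<forall>v. 0 \<le> Re (qform n v A))"
  unfolding psd_op_def qform_def ..

lemma qform_add:
  "A \<in> carrier_mat n n \<Longrightarrow> B \<in> carrier_mat n n \<Longrightarrow> qform n v (A + B) = qform n v A + qform n v B"
  unfolding qform_def by (simp add: sum.distrib[symmetric] distrib_left distrib_right)

lemma qform_smult: "A \<in> carrier_mat n n \<Longrightarrow> qform n v (c \<cdot>\<^sub>m A) = c * qform n v A"
  unfolding qform_def by (simp add: sum_distrib_left mult_ac)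

lemma Im_qform_hermitian:
  assumes "hermitian_op n A"
  shows "Im (qform n v A) = 0"
proof -
  have "cnj (A $$ (i,j)) = A $$ (j,i)" if "i < n" "j < n" for i j
    using assms that unfolding hermitian_op_def by (metis complex_cnj_cnj)
  then have "cnj (qform n v A) = (\<Sum>i<n. \<Sum>j<n. v i * A $$ (j,i) * cnj (v j))"
    unfolding qform_def cnj_sum by (intro sum.cong refl) simp
  also have "\<dots> = qform n v A"
    unfolding qform_def by (subst sum.swap) (simp add: mult_ac)
  finally have "Im (cnj (qform n v A)) = Im (qform n v A)" by simp
  then show ?thesis by simp
qed

lemma sum_delta_mult:
  fixes f :: "'i \<Rightarrow> 'a::semiring_1"
  assumes "finite S" "x \<in> S"
  shows "(\<Sum>i\<in>S. of_bool (i = x) * f i) = f x" "(\<Sum>i\<in>S. of_bool (x = i) * f i) = f x"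
proof -
  have "(\<Sum>i\<in>S. of_bool (i = x) * f i) = (\<Sum>i\<in>S. if i = x then f i else 0)"
    "(\<Sum>i\<in>S. of_bool (x = i) * f i) = (\<Sum>i\<in>S. if x = i then f i else 0)"
    by (intro sum.cong; simp)+
  with assms show "(\<Sum>i\<in>S. of_bool (i = x) * f i) = f x" "(\<Sum>i\<in>S. of_bool (x = i) * f i) = f x"
    by simp_all
qed

lemma cnj_of_bool [simp]: "cnj (of_bool b) = of_bool b"
  by (cases b) simp_all

lemma qform_unit_vec:
  assumes "x < n"
  shows "qform n (\<lambda>a. of_bool (a = x)) A = A $$ (x,x)"
proof -
  have "qform n (\<lambda>a. of_bool (a = x)) A = (\<Sum>i<n. of_bool (i = x) * (\<Sum>j<n. of_bool (j = x) * A $$ (i,j)))"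
    unfolding qform_def sum_distrib_left by (intro sum.cong refl) (simp only: cnj_of_bool mult_ac)
  with assms show ?thesis
    by (simp only: sum_delta_mult finite_lessThan lessThan_iff)
qed

lemma psd_op_diag:
  assumes "psd_op n A" "x < n"
  shows "Im (A $$ (x,x)) = 0" "0 \<le> Re (A $$ (x,x))"
  using assms qform_unit_vec[OF assms(2), of A] Im_qform_hermitian
  unfolding psd_op_iff_qform by metis+

lemma density_ops_hermitian: "\<omega> \<in> density_ops d \<Longrightarrow> hermitian_op d \<omega>"
  unfolding density_ops_def psd_op_def by blast

lemma density_ops_carrier: "\<omega> \<in> density_ops d \<Longrightarrow> \<omega> \<in> carrier_mat d d"
  unfolding density_ops_def psd_op_def hermitian_op_def by blast

lemma density_ops_dim_pos: "\<omega> \<in> density_ops d \<Longrightarrow> 0 < d"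
  using density_ops_carrier[of \<omega> d] unfolding density_ops_def trace_op_def by (cases d) auto

lemma prob_dist_bounds: "prob_dist L p \<Longrightarrow> l \<in> L \<Longrightarrow> 0 \<le> p l \<and> p l \<le> 1"
  using member_le_sum[of l L p] unfolding prob_dist_def by auto

section \<open>Rank-one POVMs and tensor products\<close>

definition rank_one_povm :: "nat \<Rightarrow> 'j set \<Rightarrow> ('j \<Rightarrow> real) \<Rightarrow> ('j \<Rightarrow> nat \<Rightarrow> complex) \<Rightarrow> bool" where
  "rank_one_povm n J w u \<longleftrightarrow> finite J \<and> (\<forall>j\<in>J. 0 \<le> w j) \<and>
     (\<forall>a<n. \<forall>b<n. (\<Sum>j\<in>J. of_real (w j) * cnj (u j a) * u j b) = of_bool (a = b))"

lemma sum_qform_rank_one_povm: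
  assumes "rank_one_povm n J w u" "X \<in> carrier_mat n n"
  shows "(\<Sum>j\<in>J. of_real (w j) * qform n (u j) X) = trace_op X"
proof -
  have "(\<Sum>j\<in>J. of_real (w j) * qform n (u j) X)
      = (\<Sum>a<n. \<Sum>b<n. X $$ (a,b) * (\<Sum>j\<in>J. of_real (w j) * cnj (u j a) * u j b))"
    unfolding qform_def sum_distrib_left
    by (subst sum.swap, rule sum.cong[OF refl], subst sum.swap) (simp add: mult_ac)
  also have "\<dots> = (\<Sum>a<n. \<Sum>b<n. of_bool (a = b) * X $$ (a,b))"
    using assms(1) unfolding rank_one_povm_def by (intro sum.cong refl) (simp add: mult.commute)
  also have "\<dots> = (\<Sum>a<n. X $$ (a,a))"
    by (intro sum.cong refl) (simp only: sum_delta_mult finite_lessThan lessThan_iff)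
  also have "\<dots> = trace_op X"
    using assms(2) unfolding trace_op_def by simp
  finally show ?thesis .
qed

lemma rank_one_povm_unit_vec: "rank_one_povm n {..<n} (\<lambda>_. 1) (\<lambda>j a. of_bool (a = j))"
  unfolding rank_one_povm_def by (simp only: of_real_1 mult_1 cnj_of_bool sum_delta_mult finite_lessThan lessThan_iff)
     simp

lemma sum_lessThan_mult:
  fixes f :: "nat \<Rightarrow> 'a::comm_monoid_add"
  shows "(\<Sum>i<r*k. f i) = (\<Sum>a<r. \<Sum>x<k. f (a*k + x))"
proof -
  have "(\<Sum>i<r*k. f i) = (\<Sum>a<r. sum f {a*k..<a*k + k})"
    using sum.nat_group[of f k r] by simp
  also have "\<dots> = (\<Sum>a<r. \<Sum>x<k. f (a*k + x))"
  proof (rule sum.cong[OF refl])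
    fix a
    show "sum f {a*k..<a*k + k} = (\<Sum>x<k. f (a*k + x))"
      by (rule sum.reindex_bij_witness[of _ "\<lambda>x. a*k + x" "\<lambda>i. i - a*k"]) auto
  qed
  finally show ?thesis .
qed

lemma mult_add_less_mult: "p < n \<Longrightarrow> a < r \<Longrightarrow> a*n + p < r*(n::nat)"
  by (metis add_less_cancel_left mult_Suc Suc_leI mult_le_mono1 add.commute order_less_le_trans)

lemma kron_entry:
  assumes "A \<in> carrier_mat n n" "B \<in> carrier_mat n' n'" "a < n" "b < n" "p < n'" "q < n'"
  shows "kron A B $$ (a*n' + p, b*n' + q) = A $$ (a,b) * B $$ (p,q)"
  using assms mult_add_less_mult[of p n' a n] mult_add_less_mult[of q n' b n] unfolding kron_def by simp

lemma kron_one_right: "kron A (1\<^sub>m 1) = A"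
  by (rule eq_matI) (auto simp: kron_def)

lemma tensor_pow_2: "tensor_pow 2 A = kron A A"
  by (simp add: numeral_2_eq_2 kron_one_right[unfolded One_nat_def])

lemma trace_kron:
  assumes "A \<in> carrier_mat n n" "B \<in> carrier_mat n' n'"
  shows "trace_op (kron A B) = trace_op A * trace_op B"
proof -
  have "trace_op (kron A B) = (\<Sum>i<n*n'. kron A B $$ (i,i))"
    using assms by (simp add: trace_op_def kron_def)
  also have "\<dots> = (\<Sum>a<n. \<Sum>p<n'. A $$ (a,a) * B $$ (p,p))"
    unfolding sum_lessThan_mult by (intro sum.cong refl) (simp add: kron_entry[OF assms])
  also have "\<dots> = trace_op A * trace_op B"
    using assms by (simp add: trace_op_def sum_product)
  finally show ?thesis .
qed

definition vec_kron :: "nat \<Rightarrow> (nat \<Rightarrow> complex) \<Rightarrow> (nat \<Rightarrow> complex) \<Rightarrow> nat \<Rightarrow> complex" where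
  "vec_kron n' u u' s = u (s div n') * u' (s mod n')"

lemma qform_kron:
  assumes "A \<in> carrier_mat n n" "B \<in> carrier_mat n' n'"
  shows "qform (n*n') (vec_kron n' u u') (kron A B) = qform n u A * qform n' u' B"
proof -
  have "qform (n*n') (vec_kron n' u u') (kron A B) =
     (\<Sum>a<n. \<Sum>p<n'. \<Sum>b<n. \<Sum>q<n'. cnj (u a * u' p) * (A $$ (a,b) * B $$ (p,q)) * (u b * u' q))"
    unfolding qform_def sum_lessThan_mult vec_kron_def by (intro sum.cong refl) (simp add: kron_entry[OF assms])
  also have "\<dots> = qform n u A * qform n' u' B"
    unfolding qform_def by (simp add: sum_product mult_ac)
  finally show ?thesis .
qed

lemma rank_one_povm_kron:
  assumes "rank_one_povm n J w u" "rank_one_povm n' J' w' u'"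
  shows "rank_one_povm (n*n') (J \<times> J') (\<lambda>(j,j'). w j * w' j') (\<lambda>(j,j'). vec_kron n' (u j) (u' j'))"
proof -
  have fin: "finite J" "finite J'" and nonneg: "\<forall>j\<in>J. 0 \<le> w j" "\<forall>j'\<in>J'. 0 \<le> w' j'"
    and id: "\<forall>a<n. \<forall>b<n. (\<Sum>j\<in>J. of_real (w j) * cnj (u j a) * u j b) = of_bool (a = b)"
      "\<forall>a<n'. \<forall>b<n'. (\<Sum>j'\<in>J'. of_real (w' j') * cnj (u' j' a) * u' j' b) = of_bool (a = b)"
    using assms unfolding rank_one_povm_def by auto
  let ?v = "\<lambda>(j,j'). vec_kron n' (u j) (u' j')"
  have "(\<Sum>jj\<in>J \<times> J'. of_real (case jj of (j,j') \<Rightarrow> w j * w' j') * cnj (?v jj a) * ?v jj b) = of_bool (a = b)"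
    if ab: "a < n*n'" "b < n*n'" for a b
  proof -
    have "n' > 0"
      using ab by (cases n') auto
    with ab have lt: "a div n' < n" "b div n' < n" "a mod n' < n'" "b mod n' < n'"
      by (auto simp: less_mult_imp_div_less)
    have "(\<Sum>jj\<in>J \<times> J'. of_real (case jj of (j,j') \<Rightarrow> w j * w' j') * cnj (?v jj a) * ?v jj b)
       = (\<Sum>j\<in>J. of_real (w j) * cnj (u j (a div n')) * u j (b div n'))
         * (\<Sum>j'\<in>J'. of_real (w' j') * cnj (u' j' (a mod n')) * u' j' (b mod n'))"
      unfolding sum_product sum.cartesian_product
      by (intro sum.cong refl) (auto simp: vec_kron_def mult_ac split: prod.splits)
    also have "\<dots> = of_bool (a div n' = b div n' \<and> a mod n' = b mod n')"
      using id lt by (simp add: of_bool_conj)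
    also have "a div n' = b div n' \<and> a mod n' = b mod n' \<longleftrightarrow> a = b"
      by (metis div_mult_mod_eq)
    finally show ?thesis .
  qed
  with fin nonneg show ?thesis
    unfolding rank_one_povm_def by auto
qed

section \<open>Measure-and-prepare channels\<close>

lemma qform_block_op:
  "qform n u (block_op n X a b) = (\<Sum>p<n. \<Sum>q<n. cnj (u p) * X $$ (a*n + p, b*n + q) * u q)"
  unfolding qform_def block_op_def by (intro sum.cong refl) simp

lemma psd_op_block_qform:
  assumes "psd_op (r*n) X"
  shows "0 \<le> Re (\<Sum>a<r. \<Sum>b<r. cnj (V a) * qform n u (block_op n X a b) * V b)"
proof -
  define z where "z s = V (s div n) * u (s mod n)" for s
  have "0 \<le> Re (qform (r*n) z X)"
    using assms unfolding psd_op_iff_qform by blast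
  also have "qform (r*n) z X
     = (\<Sum>a<r. \<Sum>p<n. \<Sum>b<r. \<Sum>q<n. cnj (V a * u p) * X $$ (a*n + p, b*n + q) * (V b * u q))"
    unfolding qform_def sum_lessThan_mult by (intro sum.cong refl) (simp add: z_def)
  also have "\<dots> = (\<Sum>a<r. \<Sum>b<r. \<Sum>p<n. \<Sum>q<n. cnj (V a * u p) * X $$ (a*n + p, b*n + q) * (V b * u q))"
    by (intro sum.cong refl sum.swap)
  also have "\<dots> = (\<Sum>a<r. \<Sum>b<r. cnj (V a) * qform n u (block_op n X a b) * V b)"
    unfolding qform_block_op by (simp add: sum_distrib_left sum_distrib_right mult_ac)
  finally show ?thesis .
qed

lemma cnj_qform_block_op:
  assumes "hermitian_op (r*n) X" "a < r" "b < r"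
  shows "cnj (qform n u (block_op n X b a)) = qform n u (block_op n X a b)"
proof -
  have "cnj (X $$ (b*n + p, a*n + q)) = X $$ (a*n + q, b*n + p)" if "p < n" "q < n" for p q
    using assms that mult_add_less_mult unfolding hermitian_op_def by (metis complex_cnj_cnj)
  then have "cnj (qform n u (block_op n X b a)) = (\<Sum>p<n. \<Sum>q<n. u p * X $$ (a*n + q, b*n + p) * cnj (u q))"
    unfolding qform_block_op cnj_sum by (intro sum.cong refl) simp
  also have "\<dots> = qform n u (block_op n X a b)"
    unfolding qform_block_op by (subst sum.swap) (simp add: mult_ac)
  finally show ?thesis .
qed

definition diag_op :: "nat \<Rightarrow> (nat \<Rightarrow> complex) \<Rightarrow> complex mat" where
  "diag_op k h = mat k k (\<lambda>(x,y). if x = y then h x else 0)"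

lemma trace_diag_op: "trace_op (diag_op k h) = (\<Sum>x<k. h x)"
  unfolding trace_op_def diag_op_def by simp

definition stochastic :: "nat \<Rightarrow> 'j set \<Rightarrow> ('j \<Rightarrow> nat \<Rightarrow> real) \<Rightarrow> bool" where
  "stochastic k J T \<longleftrightarrow> (\<forall>j\<in>J. (\<forall>x<k. 0 \<le> T j x) \<and> (\<Sum>x<k. T j x) = 1)"

text \<open>Measure the rank-one POVM with elements \<open>w j |u j\<rangle>\<langle>u j|\<close> and, on outcome \<open>j\<close>,
  prepare the basis state \<open>|x\<rangle>\<langle>x|\<close> of \<open>\<complex>\<^sup>k\<close> with probability \<open>T j x\<close>.\<close>
definition measure_prepare :: "nat \<Rightarrow> nat \<Rightarrow> 'j set \<Rightarrow> ('j \<Rightarrow> real) \<Rightarrow> ('j \<Rightarrow> nat \<Rightarrow> complex)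
    \<Rightarrow> ('j \<Rightarrow> nat \<Rightarrow> real) \<Rightarrow> complex mat \<Rightarrow> complex mat" where
  "measure_prepare n k J w u T X = diag_op k (\<lambda>x. \<Sum>j\<in>J. of_real (w j * T j x) * qform n (u j) X)"

lemma ampliate_measure_prepare_entry:
  assumes "i < r*k" "i' < r*k"
  shows "ampliate r n k (measure_prepare n k J w u T) X $$ (i,i') =
    of_bool (i mod k = i' mod k) *
      (\<Sum>j\<in>J. of_real (w j * T j (i mod k)) * qform n (u j) (block_op n X (i div k) (i' div k)))"
proof -
  have "k > 0" using assms by (cases k) auto
  then show ?thesis using assms unfolding ampliate_def measure_prepare_def diag_op_def by simp
qed

lemma qform_ampliate_measure_prepare:
  "qform (r*k) v (ampliate r n k (measure_prepare n k J w u T) X) =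
    (\<Sum>x<k. \<Sum>j\<in>J. of_real (w j * T j x) *
       (\<Sum>a<r. \<Sum>b<r. cnj (v (a*k + x)) * qform n (u j) (block_op n X a b) * v (b*k + x)))"
    (is "_ = (\<Sum>x<k. \<Sum>j\<in>J. ?c x j * ?Q x j)")
proof -
  let ?Y = "ampliate r n k (measure_prepare n k J w u T) X"
  let ?S = "\<lambda>x a b. \<Sum>j\<in>J. of_real (w j * T j x) * qform n (u j) (block_op n X a b)"
  have entry: "?Y $$ (a*k + x, b*k + y) = of_bool (x = y) * ?S x a b" if "a < r" "b < r" "x < k" "y < k" for a b x y
    using that by (simp add: ampliate_measure_prepare_entry mult_add_less_mult)
  have "qform (r*k) v ?Y =
      (\<Sum>a<r. \<Sum>x<k. \<Sum>b<r. \<Sum>y<k. of_bool (x = y) * (cnj (v (a*k + x)) * ?S x a b * v (b*k + y)))"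
    unfolding qform_def[of "r*k"] sum_lessThan_mult by (intro sum.cong refl) (simp add: entry mult_ac)
  also have "\<dots> = (\<Sum>a<r. \<Sum>x<k. \<Sum>b<r. cnj (v (a*k + x)) * ?S x a b * v (b*k + x))"
    by (intro sum.cong refl) (simp only: sum_delta_mult finite_lessThan lessThan_iff)
  also have "\<dots> = (\<Sum>x<k. \<Sum>a<r. \<Sum>b<r. cnj (v (a*k + x)) * ?S x a b * v (b*k + x))"
    by (rule sum.swap)
  also have "\<dots> = (\<Sum>x<k. \<Sum>j\<in>J. ?c x j * ?Q x j)"
    by (simp add: sum_distrib_left sum_distrib_right mult_ac sum.swap[of _ J])
  finally show ?thesis .
qed

lemma hermitian_op_ampliate_measure_prepare:
  assumes "hermitian_op (r*n) X"
  shows "hermitian_op (r*k) (ampliate r n k (measure_prepare n k J w u T) X)"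
  unfolding hermitian_op_def
proof (intro conjI allI impI)
  show "ampliate r n k (measure_prepare n k J w u T) X \<in> carrier_mat (r*k) (r*k)"
    unfolding ampliate_def by simp
next
  fix i i' assume i: "i < r*k" "i' < r*k"
  then have "i div k < r" "i' div k < r"
    by (auto simp: less_mult_imp_div_less)
  then show "ampliate r n k (measure_prepare n k J w u T) X $$ (i,i') =
      cnj (ampliate r n k (measure_prepare n k J w u T) X $$ (i',i))"
    unfolding ampliate_measure_prepare_entry[OF i] ampliate_measure_prepare_entry[OF i(2,1)]
    by (auto simp: cnj_sum cnj_qform_block_op[OF assms])
qed

lemma measure_prepare_add:
  assumes "A \<in> carrier_mat n n" "B \<in> carrier_mat n n"
  shows "measure_prepare n k J w u T (A + B) = measure_prepare n k J w u T A + measure_prepare n k J w u T B"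
  by (rule eq_matI) (simp_all add: measure_prepare_def diag_op_def qform_add[OF assms] distrib_left sum.distrib)

lemma measure_prepare_smult:
  assumes "A \<in> carrier_mat n n"
  shows "measure_prepare n k J w u T (c \<cdot>\<^sub>m A) = c \<cdot>\<^sub>m measure_prepare n k J w u T A"
  by (rule eq_matI) (simp_all add: measure_prepare_def diag_op_def qform_smult[OF assms] sum_distrib_left mult_ac)

lemma trace_measure_prepare:
  assumes "rank_one_povm n J w u" "stochastic k J T" "A \<in> carrier_mat n n"
  shows "trace_op (measure_prepare n k J w u T A) = trace_op A"
proof -
  have "trace_op (measure_prepare n k J w u T A) = (\<Sum>j\<in>J. of_real (w j * (\<Sum>x<k. T j x)) * qform n (u j) A)"
    unfolding measure_prepare_def trace_diag_op
    by (subst sum.swap) (simp add: sum_distrib_left sum_distrib_right)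
  also have "\<dots> = (\<Sum>j\<in>J. of_real (w j) * qform n (u j) A)"
    using assms(2) unfolding stochastic_def by (intro sum.cong) auto
  also have "\<dots> = trace_op A"
    using sum_qform_rank_one_povm[OF assms(1,3)] .
  finally show ?thesis .
qed

lemma psd_op_ampliate_measure_prepare:
  assumes "rank_one_povm n J w u" "stochastic k J T" "psd_op (r*n) X"
  shows "psd_op (r*k) (ampliate r n k (measure_prepare n k J w u T) X)"
proof -
  have Re_scale: "Re (of_real c * z) = c * Re z" for c z
    by simp
  have "0 \<le> Re (qform (r*k) v (ampliate r n k (measure_prepare n k J w u T) X))" for v
  proof -
    have nonneg: "0 \<le> w j * T j x *
        Re (\<Sum>a<r. \<Sum>b<r. cnj (v (a*k + x)) * qform n (u j) (block_op n X a b) * v (b*k + x))"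
      if "x < k" "j \<in> J" for x j
      using assms(1,2) that psd_op_block_qform[OF assms(3), of "\<lambda>a. v (a*k + x)"]
      unfolding rank_one_povm_def stochastic_def by (intro mult_nonneg_nonneg) auto
    show ?thesis
      unfolding qform_ampliate_measure_prepare Re_sum[of _ "{..<k}"] Re_sum[of _ J] Re_scale
      by (intro sum_nonneg) (rule nonneg; simp)
  qed
  moreover have "hermitian_op (r*k) (ampliate r n k (measure_prepare n k J w u T) X)"
    using assms(3) unfolding psd_op_iff_qform by (intro hermitian_op_ampliate_measure_prepare) simp
  ultimately show ?thesis
    unfolding psd_op_iff_qform by simp
qed

lemma channel_measure_prepare:
  assumes "rank_one_povm n J w u" "stochastic k J T"
  shows "channel n k (measure_prepare n k J w u T)"
  unfolding channel_def
  using assms measure_prepare_add measure_prepare_smult trace_measure_prepare psd_op_ampliate_measure_prepare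
  by (auto simp: measure_prepare_def diag_op_def)

definition discard_channel :: "nat \<Rightarrow> complex mat \<Rightarrow> complex mat" where
  "discard_channel n = measure_prepare n 2 {..<n} (\<lambda>_. 1) (\<lambda>j a. of_bool (a = j)) (\<lambda>_ x. of_bool (x = 1))"

lemma channel_discard_channel: "channel n 2 (discard_channel n)"
  unfolding discard_channel_def
  by (rule channel_measure_prepare[OF rank_one_povm_unit_vec])
     (simp add: stochastic_def numeral_2_eq_2)

lemma discard_channel_apply:
  assumes "X \<in> carrier_mat n n"
  shows "discard_channel n X = diag_op 2 (\<lambda>x. of_bool (x = 1) * trace_op X)"
proof -
  have eq: "(\<Sum>j<n. of_real (1 * of_bool (x = 1)) * qform n (\<lambda>a. of_bool (a = j)) X)
      = of_bool (x = 1) * trace_op X" for x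
  proof -
    have "(\<Sum>j<n. of_real (1 * of_bool (x = 1)) * qform n (\<lambda>a. of_bool (a = j)) X)
        = of_real (of_bool (x = 1)) * (\<Sum>j<n. of_real 1 * qform n (\<lambda>a. of_bool (a = j)) X)"
      by (simp only: sum_distrib_left mult_1 of_real_1)
    then show ?thesis
      using sum_qform_rank_one_povm[OF rank_one_povm_unit_vec assms] by simp
  qed
  show ?thesis
    unfolding discard_channel_def measure_prepare_def eq ..
qed

section \<open>Discriminating a flag channel from the constant one\<close>

lemma trace_mult_diag_op:
  assumes "M \<in> carrier_mat k k"
  shows "trace_op (M * diag_op k h) = (\<Sum>x<k. M $$ (x,x) * h x)"
  using assms unfolding trace_op_def diag_op_def
  by (intro sum.cong) (auto simp: scalar_prod_def if_distrib cong: if_cong)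

lemma p_succ_flag_ensemble:
  fixes \<Lambda> :: "nat \<Rightarrow> complex mat \<Rightarrow> complex mat" and M :: "nat \<Rightarrow> complex mat"
  assumes "\<Lambda> 0 \<omega> = diag_op 2 f" "\<Lambda> 1 \<omega> = diag_op 2 (\<lambda>x. of_bool (x = 1))"
    and "M 0 \<in> carrier_mat 2 2" "M 1 \<in> carrier_mat 2 2"
  shows "p_succ {0,1} (\<lambda>_. 1/2) \<Lambda> M \<omega> =
    (Re (M 0 $$ (0,0) * f 0) + Re (M 0 $$ (1,1) * f 1) + Re (M 1 $$ (1,1))) / 2"
proof -
  have "p_succ {0,1} (\<lambda>_. 1/2) \<Lambda> M \<omega> =
      (Re (trace_op (M 0 * diag_op 2 f)) + Re (trace_op (M 1 * diag_op 2 (\<lambda>x. of_bool (x = 1))))) / 2"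
    using assms(1,2) by (simp add: p_succ_def)
  also have "\<dots> = (Re (M 0 $$ (0,0) * f 0) + Re (M 0 $$ (1,1) * f 1) + Re (M 1 $$ (1,1))) / 2"
    using assms(3,4) by (simp add: trace_mult_diag_op numeral_2_eq_2)
  finally show ?thesis .
qed

lemma p_succ_flag_ensemble_le:
  fixes \<Lambda> :: "nat \<Rightarrow> complex mat \<Rightarrow> complex mat"
  assumes \<Lambda>: "\<Lambda> 0 \<omega> = diag_op 2 f" "\<Lambda> 1 \<omega> = diag_op 2 (\<lambda>x. of_bool (x = 1))"
    and f: "f 0 + f 1 = 1" "0 \<le> Re (f 0)" and M: "povm 2 {0,1} M"
  shows "p_succ {0,1} (\<lambda>_. 1/2) \<Lambda> M \<omega> \<le> (1 + Re (f 0)) / 2"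
proof -
  have psd: "psd_op 2 (M 0)" "psd_op 2 (M 1)"
    using M unfolding povm_def by auto
  then have carrier: "M 0 \<in> carrier_mat 2 2" "M 1 \<in> carrier_mat 2 2"
    unfolding psd_op_def hermitian_op_def by auto
  have sum: "Re (M 0 $$ (x,x)) + Re (M 1 $$ (x,x)) = 1" if "x < 2" for x
  proof -
    have "M 0 $$ (x,x) + M 1 $$ (x,x) = 1"
      using M that unfolding povm_def by auto
    then have "Re (M 0 $$ (x,x) + M 1 $$ (x,x)) = Re 1"
      by (rule arg_cong)
    then show ?thesis
      by simp
  qed
  have real: "Im (M 0 $$ (0,0)) = 0" "Im (M 0 $$ (1,1)) = 0"
    using psd_op_diag(1)[OF psd(1)] by auto
  have nonneg: "0 \<le> Re (M 1 $$ (0,0))" "0 \<le> Re (M 0 $$ (1,1))"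
    using psd_op_diag(2) psd by auto
  have Re_terms: "Re (M 0 $$ (0,0) * f 0) = Re (M 0 $$ (0,0)) * Re (f 0)"
    "Re (M 0 $$ (1,1) * f 1) = Re (M 0 $$ (1,1)) * (1 - Re (f 0))"
    "Re (M 1 $$ (1,1)) = 1 - Re (M 0 $$ (1,1))"
    using real sum[of 1] arg_cong[OF f(1), of Re] by (simp_all add: eq_diff_eq)
  have "p_succ {0,1} (\<lambda>_. 1/2) \<Lambda> M \<omega> = (1 + Re (f 0) * (Re (M 0 $$ (0,0)) - Re (M 0 $$ (1,1)))) / 2"
    unfolding p_succ_flag_ensemble[of \<Lambda> \<omega> f M, OF \<Lambda> carrier] Re_terms by (simp add: algebra_simps)
  also have "\<dots> \<le> (1 + Re (f 0)) / 2"
    using mult_left_le[of "Re (M 0 $$ (0,0)) - Re (M 0 $$ (1,1))" "Re (f 0)"] sum[of 0] nonneg f(2) by simp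
  finally show ?thesis .
qed

lemma opt_p_succ_flag_ensemble:
  fixes \<Lambda> :: "nat \<Rightarrow> complex mat \<Rightarrow> complex mat"
  assumes \<Lambda>: "\<Lambda> 0 \<omega> = diag_op 2 f" "\<Lambda> 1 \<omega> = diag_op 2 (\<lambda>x. of_bool (x = 1))"
    and f: "f 0 + f 1 = 1" "0 \<le> Re (f 0)"
  shows "opt_p_succ {0,1} (\<lambda>_. 1/2) \<Lambda> 2 \<omega> = (1 + Re (f 0)) / 2"
  unfolding opt_p_succ_def
proof (rule cSup_eq_maximum)
  define E :: "nat \<Rightarrow> complex mat" where "E i = diag_op 2 (\<lambda>x. of_bool (x = i))" for i
  have "povm 2 {0,1} E"
    unfolding povm_def psd_op_def hermitian_op_def E_def diag_op_def
    by (auto simp: numeral_2_eq_2 lessThan_Suc less_Suc_eq)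
  moreover have "p_succ {0,1} (\<lambda>_. 1/2) \<Lambda> E \<omega> = (1 + Re (f 0)) / 2"
    by (subst p_succ_flag_ensemble[of \<Lambda> \<omega> f, OF \<Lambda>]) (auto simp: E_def diag_op_def)
  ultimately show "(1 + Re (f 0)) / 2 \<in> {p_succ {0,1} (\<lambda>_. 1/2) \<Lambda> M \<omega> | M. povm 2 {0,1} M}"
    by (intro CollectI exI[of _ E]) simp
qed (use p_succ_flag_ensemble_le[of \<Lambda> \<omega> f, OF \<Lambda> f] in blast)

section \<open>An informationally complete POVM\<close>

definition ic_index :: "nat \<Rightarrow> (nat \<times> nat \<times> nat) set" where
  "ic_index d = {..<d} \<times> {..<d} \<times> {..<4}"

definition ic_vec :: "nat \<times> nat \<times> nat \<Rightarrow> nat \<Rightarrow> complex" where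
  "ic_vec = (\<lambda>(i, j, k) a. of_bool (a = i) + \<i> ^ k * of_bool (a = j))"

text \<open>The phases \<open>\<i>\<^sup>k\<close> cancel the cross terms, so the operators \<open>|ic_vec l\<rangle>\<langle>ic_vec l|\<close>
  add up to \<open>8 d\<close> times the identity.\<close>
definition ic_weight :: "nat \<Rightarrow> real" where
  "ic_weight d = 1 / (8 * d)"

lemma ic_vec_phase_sum:
  "(\<Sum>k<4. cnj (ic_vec (i,j,k) a) * ic_vec (i,j,k) b) =
     4 * (of_bool (a = i) * of_bool (b = i) + of_bool (a = j) * of_bool (b = j))"
  by (simp add: ic_vec_def eval_nat_numeral lessThan_Suc algebra_simps)

lemma rank_one_povm_ic: "rank_one_povm d (ic_index d) (\<lambda>_. ic_weight d) ic_vec"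
proof -
  have "(\<Sum>l\<in>ic_index d. of_real (ic_weight d) * cnj (ic_vec l a) * ic_vec l b) = of_bool (a = b)"
    if "a < d" "b < d" for a b
  proof -
    have "(\<Sum>l\<in>ic_index d. of_real (ic_weight d) * cnj (ic_vec l a) * ic_vec l b)
        = of_real (ic_weight d) * (\<Sum>l\<in>ic_index d. cnj (ic_vec l a) * ic_vec l b)"
      by (simp only: mult.assoc sum_distrib_left)
    also have "(\<Sum>l\<in>ic_index d. cnj (ic_vec l a) * ic_vec l b)
        = (\<Sum>i<d. \<Sum>j<d. 4 * (of_bool (a = i) * of_bool (b = i) + of_bool (a = j) * of_bool (b = j)))"
      unfolding ic_index_def sum.cartesian_product[symmetric] ic_vec_phase_sum[symmetric]
      by (simp add: sum.cartesian_product)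
    also have "\<dots> = 8 * of_nat d * of_bool (b = a)"
      using that by (simp add: sum.distrib sum_distrib_left[symmetric] sum_delta_mult algebra_simps)
    also have "of_real (ic_weight d) * (8 * of_nat d * of_bool (b = a)) = (of_bool (a = b) :: complex)"
      using that by (auto simp: ic_weight_def)
    finally show ?thesis .
  qed
  then show ?thesis
    unfolding rank_one_povm_def ic_index_def ic_weight_def by simp
qed

lemma qform_ic_vec:
  assumes "i < d" "j < d"
  shows "qform d (ic_vec (i,j,k)) \<omega> =
    \<omega> $$ (i,i) + \<i>^k * \<omega> $$ (i,j) + cnj (\<i>^k) * \<omega> $$ (j,i) + \<omega> $$ (j,j)"
proof -
  have inner: "(\<Sum>b<d. \<omega> $$ (a,b) * ic_vec (i,j,k) b) = \<omega> $$ (a,i) + \<i>^k * \<omega> $$ (a,j)" for a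
    using assms by (simp add: ic_vec_def distrib_left sum.distrib mult.left_commute sum_distrib_left[symmetric])
  have unit: "cnj (\<i>^k) * \<i>^k = 1"
    by (simp flip: power_mult_distrib)
  have "qform d (ic_vec (i,j,k)) \<omega> = (\<Sum>a<d. cnj (ic_vec (i,j,k) a) * (\<omega> $$ (a,i) + \<i>^k * \<omega> $$ (a,j)))"
    by (simp only: qform_def mult.assoc sum_distrib_left[symmetric] inner)
  also have "\<dots> = \<omega> $$ (i,i) + \<i>^k * \<omega> $$ (i,j) + cnj (\<i>^k) * (\<omega> $$ (j,i) + \<i>^k * \<omega> $$ (j,j))"
    using assms by (simp add: ic_vec_def distrib_right sum.distrib mult.assoc sum_distrib_left[symmetric])
  also have "\<dots> = \<omega> $$ (i,i) + \<i>^k * \<omega> $$ (i,j) + cnj (\<i>^k) * \<omega> $$ (j,i) + \<omega> $$ (j,j)"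
    using unit by (simp only: distrib_left mult.assoc[symmetric] mult_1 add.assoc)
  finally show ?thesis .
qed

lemma ic_entry_recover:
  assumes "i < d" "j < d"
  shows "\<omega> $$ (i,j) = (qform d (ic_vec (i,j,0)) \<omega> - \<i> * qform d (ic_vec (i,j,1)) \<omega>
      - (1 - \<i>) * (qform d (ic_vec (i,i,0)) \<omega> + qform d (ic_vec (j,j,0)) \<omega>) / 4) / 2"
  using assms by (simp add: qform_ic_vec field_simps)

definition ic_prob :: "nat \<Rightarrow> complex mat \<Rightarrow> nat \<times> nat \<times> nat \<Rightarrow> real" where
  "ic_prob d \<omega> l = ic_weight d * Re (qform d (ic_vec l) \<omega>)"

lemma of_real_ic_prob:
  assumes "hermitian_op d \<omega>"
  shows "of_real (ic_prob d \<omega> l) = of_real (ic_weight d) * qform d (ic_vec l) \<omega>"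
  using Im_qform_hermitian[OF assms, of "ic_vec l"] unfolding ic_prob_def by (simp add: complex_eq_iff)

lemma prob_dist_ic_prob:
  assumes "\<omega> \<in> density_ops d"
  shows "prob_dist (ic_index d) (ic_prob d \<omega>)"
proof -
  have "of_real (\<Sum>l\<in>ic_index d. ic_prob d \<omega> l) = (\<Sum>l\<in>ic_index d. of_real (ic_weight d) * qform d (ic_vec l) \<omega>)"
    unfolding of_real_sum by (intro sum.cong refl of_real_ic_prob density_ops_hermitian assms)
  also have "\<dots> = trace_op \<omega>"
    by (rule sum_qform_rank_one_povm[OF rank_one_povm_ic density_ops_carrier[OF assms]])
  also have "\<dots> = 1"
    using assms unfolding density_ops_def by simp
  finally have "(\<Sum>l\<in>ic_index d. ic_prob d \<omega> l) = 1"
    by (simp only: of_real_eq_1_iff)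
  moreover have "0 \<le> ic_prob d \<omega> l" for l
    using assms unfolding density_ops_def psd_op_iff_qform ic_prob_def ic_weight_def by simp
  ultimately show ?thesis
    unfolding prob_dist_def ic_index_def by simp
qed

definition ic_dist :: "nat \<Rightarrow> complex mat \<Rightarrow> complex mat \<Rightarrow> real" where
  "ic_dist d \<sigma> \<rho> = (\<Sum>l\<in>ic_index d. (ic_prob d \<sigma> l - ic_prob d \<rho> l)\<^sup>2)"

lemma ic_dist_self [simp]: "ic_dist d \<rho> \<rho> = 0"
  by (simp add: ic_dist_def)

lemma sum_sq_diff_prob_dist_le_2:
  assumes "prob_dist L q" "prob_dist L a"
  shows "(\<Sum>l\<in>L. (q l - a l)\<^sup>2) \<le> 2"
proof -
  have "(q l - a l)\<^sup>2 \<le> q l + a l" if "l \<in> L" for l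
  proof -
    have "0 \<le> q l" "q l \<le> 1" "0 \<le> a l" "a l \<le> 1"
      using prob_dist_bounds[OF assms(1) that] prob_dist_bounds[OF assms(2) that] by auto
    then have "q l * q l \<le> q l" "a l * a l \<le> a l" "0 \<le> q l * a l"
      by (simp_all add: mult_left_le)
    moreover have "(q l - a l)\<^sup>2 = q l * q l + a l * a l - 2 * (q l * a l)"
      by (simp add: power2_eq_square algebra_simps)
    ultimately show ?thesis
      by linarith
  qed
  then have "(\<Sum>l\<in>L. (q l - a l)\<^sup>2) \<le> (\<Sum>l\<in>L. q l + a l)"
    by (rule sum_mono)
  also have "\<dots> = 2"
    using assms unfolding prob_dist_def by (simp add: sum.distrib)
  finally show ?thesis .
qed

lemma ic_dist_le_2: "\<sigma> \<in> density_ops d \<Longrightarrow> \<rho> \<in> density_ops d \<Longrightarrow> ic_dist d \<sigma> \<rho> \<le> 2"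
  unfolding ic_dist_def by (intro sum_sq_diff_prob_dist_le_2 prob_dist_ic_prob)

lemma not_bounded_away_from_zero_seq:
  fixes f :: "'a \<Rightarrow> real"
  assumes "\<not> (\<exists>\<delta>>0. \<forall>x\<in>S. \<delta> \<le> f x)" "\<And>x. x \<in> S \<Longrightarrow> 0 \<le> f x"
  obtains s where "\<And>n. s n \<in> S" "(\<lambda>n. f (s n)) \<longlonglongrightarrow> 0"
proof -
  have "\<exists>x\<in>S. f x < inverse (real (Suc n))" for n
    using assms(1) by (metis not_le inverse_positive_iff_positive of_nat_0_less_iff zero_less_Suc)
  then obtain s where s: "\<And>n. s n \<in> S" "\<And>n. f (s n) < inverse (real (Suc n))"
    by metis
  have "(\<lambda>n. f (s n)) \<longlonglongrightarrow> 0"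
  proof (rule tendsto_sandwich[of "\<lambda>_. 0" _ _ "\<lambda>n. inverse (real (Suc n))"])
    show "\<forall>\<^sub>F n in sequentially. 0 \<le> f (s n)"
      using assms(2) s(1) by simp
    show "\<forall>\<^sub>F n in sequentially. f (s n) \<le> inverse (real (Suc n))"
      using s(2) by (simp add: less_imp_le)
  qed (use LIMSEQ_inverse_real_of_nat in auto)
  with s(1) show ?thesis
    by (rule that)
qed

lemma tendsto_entries_ic:
  assumes "\<And>l. l \<in> ic_index d \<Longrightarrow> (\<lambda>n. qform d (ic_vec l) (X n)) \<longlonglongrightarrow> qform d (ic_vec l) A"
    and "i < d" "j < d"
  shows "(\<lambda>n. X n $$ (i,j)) \<longlonglongrightarrow> A $$ (i,j)"
  unfolding ic_entry_recover[OF assms(2,3)]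
  using assms(2,3) by (intro tendsto_intros assms(1)) (auto simp: ic_index_def)

lemma ic_dist_bounded_below:
  assumes F: "F \<subseteq> density_ops d" "closed_ops d F" and \<rho>: "\<rho> \<in> density_ops d" "\<rho> \<notin> F"
  shows "\<exists>\<delta>>0. \<forall>\<sigma>\<in>F. \<delta> \<le> ic_dist d \<sigma> \<rho>"
proof (rule ccontr)
  assume "\<not> ?thesis"
  then obtain s where s: "\<And>n. s n \<in> F" and lim: "(\<lambda>n. ic_dist d (s n) \<rho>) \<longlonglongrightarrow> 0"
    by (rule not_bounded_away_from_zero_seq[where f = "\<lambda>\<sigma>. ic_dist d \<sigma> \<rho>"])
       (auto simp: ic_dist_def intro: sum_nonneg)
  have prob: "(\<lambda>n. ic_prob d (s n) l) \<longlonglongrightarrow> ic_prob d \<rho> l" if l: "l \<in> ic_index d" for l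
  proof -
    have bound: "norm (ic_prob d (s n) l - ic_prob d \<rho> l) \<le> sqrt (ic_dist d (s n) \<rho>)" for n
      unfolding ic_dist_def real_norm_def
      by (rule real_le_rsqrt, subst power2_abs, rule member_le_sum[OF l]) (auto simp: ic_index_def)
    have "(\<lambda>n. sqrt (ic_dist d (s n) \<rho>)) \<longlonglongrightarrow> 0"
      using tendsto_real_sqrt[OF lim] by (simp only: real_sqrt_zero)
    then have "(\<lambda>n. ic_prob d (s n) l - ic_prob d \<rho> l) \<longlonglongrightarrow> 0"
      by (rule Lim_null_comparison[OF always_eventually[OF allI[OF bound]]])
    then show ?thesis
      by (rule LIM_zero_cancel)
  qed
  have w: "ic_weight d \<noteq> 0"
    using density_ops_dim_pos[OF \<rho>(1)] by (simp add: ic_weight_def)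
  have qform_eq: "qform d (ic_vec l) \<omega> = of_real (ic_prob d \<omega> l) / of_real (ic_weight d)"
    if "\<omega> \<in> density_ops d" for \<omega> l
    using of_real_ic_prob[OF density_ops_hermitian[OF that]] w by (simp add: field_simps)
  have "(\<lambda>n. qform d (ic_vec l) (s n)) \<longlonglongrightarrow> qform d (ic_vec l) \<rho>" if "l \<in> ic_index d" for l
    unfolding qform_eq[OF \<rho>(1)] qform_eq[OF subsetD[OF F(1) s]]
    by (intro tendsto_intros prob[OF that]) (simp add: w)
  then have "(\<lambda>n. s n $$ (i,j)) \<longlonglongrightarrow> \<rho> $$ (i,j)" if "i < d" "j < d" for i j
    using tendsto_entries_ic that by blast
  then have "\<rho> \<in> F"
    using F(2) s density_ops_carrier[OF \<rho>(1)] unfolding closed_ops_def by blast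
  with \<rho>(2) show False
    by blast
qed

section \<open>The test channel\<close>

definition accept_kernel :: "'l set \<Rightarrow> ('l \<Rightarrow> real) \<Rightarrow> 'l \<times> 'l \<Rightarrow> real" where
  "accept_kernel L a = (\<lambda>(l, l'). 1/2 - (of_bool (l = l') - a l - a l' + (\<Sum>m\<in>L. (a m)\<^sup>2)) / 8)"

lemma accept_kernel_bounds:
  assumes "prob_dist L a" "l \<in> L" "l' \<in> L"
  shows "0 \<le> accept_kernel L a (l, l')" "accept_kernel L a (l, l') \<le> 1"
proof -
  have "(\<Sum>m\<in>L. (a m)\<^sup>2) \<le> (\<Sum>m\<in>L. a m)"
    using prob_dist_bounds[OF assms(1)] by (intro sum_mono) (simp add: power2_eq_square mult_left_le)
  then have "(\<Sum>m\<in>L. (a m)\<^sup>2) \<le> 1"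
    using assms(1) unfolding prob_dist_def by simp
  moreover have "0 \<le> (\<Sum>m\<in>L. (a m)\<^sup>2)"
    by (simp add: sum_nonneg)
  moreover have "0 \<le> a l" "a l \<le> 1" "0 \<le> a l'" "a l' \<le> 1"
    using prob_dist_bounds[OF assms(1,2)] prob_dist_bounds[OF assms(1,3)] by auto
  ultimately show "0 \<le> accept_kernel L a (l, l')" "accept_kernel L a (l, l') \<le> 1"
    unfolding accept_kernel_def by (auto simp: field_simps)
qed

lemma sum_accept_kernel:
  assumes "finite L" "sum q L = 1" "sum a L = 1"
  shows "(\<Sum>(l,l')\<in>L \<times> L. accept_kernel L a (l,l') * q l * q l') = 1/2 - (\<Sum>l\<in>L. (q l - a l)\<^sup>2) / 8"
proof -
  define A where "A = (\<Sum>m\<in>L. (a m)\<^sup>2)"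
  define B where "B = (\<Sum>m\<in>L. a m * q m)"
  have inner: "(\<Sum>l'\<in>L. accept_kernel L a (l,l') * q l * q l') = (1/2 - A/8) * q l + a l * q l / 8 + q l * B / 8 - q l * q l / 8"
    if "l \<in> L" for l
  proof -
    have "(\<Sum>l'\<in>L. accept_kernel L a (l,l') * q l * q l')
        = (\<Sum>l'\<in>L. ((1/2 - A/8) * q l + a l * q l / 8) * q l' + q l / 8 * (a l' * q l') - q l / 8 * (of_bool (l = l') * q l'))"
      by (intro sum.cong refl) (auto simp: accept_kernel_def A_def field_simps)
    also have "\<dots> = ((1/2 - A/8) * q l + a l * q l / 8) * (\<Sum>l'\<in>L. q l') + q l / 8 * B - q l / 8 * q l"
      using assms(1) that
      by (simp add: sum.distrib sum_subtractf sum_divide_distrib[symmetric] sum_distrib_left[symmetric] B_def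
          sum_delta_mult del: sum_of_bool_mult_eq)
    finally show ?thesis
      using assms(2) by (simp add: algebra_simps)
  qed
  have "(\<Sum>(l,l')\<in>L \<times> L. accept_kernel L a (l,l') * q l * q l')
      = (\<Sum>l\<in>L. (1/2 - A/8) * q l + a l * q l / 8 + q l * B / 8 - q l * q l / 8)"
    unfolding sum.cartesian_product[symmetric] by (intro sum.cong refl inner)
  also have "\<dots> = 1/2 - (A - 2 * B + (\<Sum>l\<in>L. q l * q l)) / 8"
    using assms(2) by (simp add: sum.distrib sum_subtractf sum_distrib_left[symmetric]
        sum_divide_distrib[symmetric] sum_distrib_right[symmetric] B_def algebra_simps)
      (simp add: field_simps)
  also have "A - 2 * B + (\<Sum>l\<in>L. q l * q l) = (\<Sum>l\<in>L. (q l - a l)\<^sup>2)"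
    unfolding A_def B_def by (simp add: power2_diff sum.distrib sum_subtractf sum_distrib_left power2_eq_square algebra_simps)
  finally show ?thesis .
qed

definition test_channel :: "nat \<Rightarrow> complex mat \<Rightarrow> complex mat \<Rightarrow> complex mat" where
  "test_channel d \<rho> = measure_prepare (d*d) 2 (ic_index d \<times> ic_index d)
     (\<lambda>(l, l'). ic_weight d * ic_weight d) (\<lambda>(l, l'). vec_kron d (ic_vec l) (ic_vec l'))
     (\<lambda>ll' x. if x = 0 then accept_kernel (ic_index d) (ic_prob d \<rho>) ll'
              else 1 - accept_kernel (ic_index d) (ic_prob d \<rho>) ll')"

lemma channel_test_channel:
  assumes "\<rho> \<in> density_ops d"
  shows "channel (d*d) 2 (test_channel d \<rho>)"
  unfolding test_channel_def
proof (rule channel_measure_prepare)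
  show "rank_one_povm (d*d) (ic_index d \<times> ic_index d) (\<lambda>(l, l'). ic_weight d * ic_weight d)
      (\<lambda>(l, l'). vec_kron d (ic_vec l) (ic_vec l'))"
    using rank_one_povm_kron[OF rank_one_povm_ic rank_one_povm_ic] .
  show "stochastic 2 (ic_index d \<times> ic_index d) (\<lambda>ll' x. if x = 0 then accept_kernel (ic_index d) (ic_prob d \<rho>) ll'
      else 1 - accept_kernel (ic_index d) (ic_prob d \<rho>) ll')"
    using accept_kernel_bounds[OF prob_dist_ic_prob[OF assms]]
    unfolding stochastic_def by (auto simp: numeral_2_eq_2 less_Suc_eq)
qed

lemma test_channel_kron:
  assumes \<rho>: "\<rho> \<in> density_ops d" and \<sigma>: "\<sigma> \<in> density_ops d"
  obtains f where "test_channel d \<rho> (kron \<sigma> \<sigma>) = diag_op 2 f" "f 0 + f 1 = 1"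
    "Re (f 0) = 1/2 - ic_dist d \<sigma> \<rho> / 8"
proof -
  let ?L = "ic_index d" and ?\<tau> = "accept_kernel (ic_index d) (ic_prob d \<rho>)"
  define f where "f x = test_channel d \<rho> (kron \<sigma> \<sigma>) $$ (x,x)" for x
  have \<sigma>_mat: "\<sigma> \<in> carrier_mat d d" and \<sigma>_herm: "hermitian_op d \<sigma>"
    using \<sigma> by (rule density_ops_carrier, rule density_ops_hermitian)
  have diag: "test_channel d \<rho> (kron \<sigma> \<sigma>) = diag_op 2 f"
    by (rule eq_matI) (simp_all add: f_def test_channel_def measure_prepare_def diag_op_def)
  have "f 0 + f 1 = trace_op (test_channel d \<rho> (kron \<sigma> \<sigma>))"
    unfolding diag trace_diag_op by (simp add: numeral_2_eq_2)
  also have "\<dots> = trace_op (kron \<sigma> \<sigma>)"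
    using channel_test_channel[OF \<rho>] \<sigma>_mat unfolding channel_def by (simp add: kron_def)
  also have "\<dots> = 1"
    using \<sigma> trace_kron[OF \<sigma>_mat \<sigma>_mat] unfolding density_ops_def by simp
  finally have "f 0 + f 1 = 1" .
  have "f 0 = (\<Sum>(l,l')\<in>?L \<times> ?L. of_real (?\<tau> (l,l')) * (of_real (ic_weight d) * qform d (ic_vec l) \<sigma>)
      * (of_real (ic_weight d) * qform d (ic_vec l') \<sigma>))"
    unfolding f_def test_channel_def measure_prepare_def diag_op_def
    by (simp add: qform_kron[OF \<sigma>_mat \<sigma>_mat] split_def mult_ac)
  also have "\<dots> = of_real (\<Sum>(l,l')\<in>?L \<times> ?L. ?\<tau> (l,l') * ic_prob d \<sigma> l * ic_prob d \<sigma> l')"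
    by (simp add: of_real_sum of_real_ic_prob[OF \<sigma>_herm] split_def)
  also have "(\<Sum>(l,l')\<in>?L \<times> ?L. ?\<tau> (l,l') * ic_prob d \<sigma> l * ic_prob d \<sigma> l') = 1/2 - ic_dist d \<sigma> \<rho> / 8"
    using prob_dist_ic_prob[OF \<sigma>] prob_dist_ic_prob[OF \<rho>]
    unfolding ic_dist_def prob_dist_def by (intro sum_accept_kernel) auto
  finally have "Re (f 0) = 1/2 - ic_dist d \<sigma> \<rho> / 8"
    by simp
  with diag \<open>f 0 + f 1 = 1\<close> show ?thesis
    by (rule that)
qed

definition test_ensemble :: "nat \<Rightarrow> complex mat \<Rightarrow> nat \<Rightarrow> nat \<Rightarrow> complex mat \<Rightarrow> complex mat" where
  "test_ensemble d \<rho> m i = (if m = 2 \<and> i = 0 then test_channel d \<rho> else discard_channel (d ^ m))"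

lemma channel_test_ensemble:
  assumes "\<rho> \<in> density_ops d"
  shows "channel (d ^ m) 2 (test_ensemble d \<rho> m i)"
  using channel_test_channel[OF assms] channel_discard_channel
  by (simp add: test_ensemble_def power2_eq_square)

lemma opt_p_succ_test_ensemble:
  assumes \<rho>: "\<rho> \<in> density_ops d" and \<sigma>: "\<sigma> \<in> density_ops d"
  shows "opt_p_succ {0,1} (\<lambda>_. 1/2) (test_ensemble d \<rho> 2) 2 (tensor_pow 2 \<sigma>) = 3/4 - ic_dist d \<sigma> \<rho> / 16"
proof -
  obtain f where f: "test_channel d \<rho> (kron \<sigma> \<sigma>) = diag_op 2 f" "f 0 + f 1 = 1"
    "Re (f 0) = 1/2 - ic_dist d \<sigma> \<rho> / 8"
    using test_channel_kron[OF \<rho> \<sigma>] .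
  have \<sigma>_mat: "\<sigma> \<in> carrier_mat d d"
    using \<sigma> by (rule density_ops_carrier)
  have "kron \<sigma> \<sigma> \<in> carrier_mat (d ^ 2) (d ^ 2)" "trace_op (kron \<sigma> \<sigma>) = 1"
    using \<sigma> trace_kron[OF \<sigma>_mat \<sigma>_mat] \<sigma>_mat unfolding density_ops_def
    by (simp_all add: kron_def power2_eq_square)
  then have "test_ensemble d \<rho> 2 1 (tensor_pow 2 \<sigma>) = diag_op 2 (\<lambda>x. of_bool (x = 1))"
    by (simp add: test_ensemble_def tensor_pow_2 discard_channel_apply)
  moreover have "0 \<le> Re (f 0)"
    using f(3) ic_dist_le_2[OF \<sigma> \<rho>] by simp
  ultimately have "opt_p_succ {0,1} (\<lambda>_. 1/2) (test_ensemble d \<rho> 2) 2 (tensor_pow 2 \<sigma>) = (1 + Re (f 0)) / 2"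
    using f(1,2) by (intro opt_p_succ_flag_ensemble) (simp_all add: test_ensemble_def tensor_pow_2)
  then show ?thesis
    using f(3) by simp
qed

lemma opt_p_succ_ratio_test_ensemble:
  assumes "\<rho> \<in> density_ops d" "\<sigma> \<in> density_ops d"
  shows "opt_p_succ {0,1} (\<lambda>_. 1/2) (test_ensemble d \<rho> 2) 2 (tensor_pow 2 \<rho>)
      / opt_p_succ {0,1} (\<lambda>_. 1/2) (test_ensemble d \<rho> 2) 2 (tensor_pow 2 \<sigma>) = 12 / (12 - ic_dist d \<sigma> \<rho>)"
  using ic_dist_le_2[OF assms(2,1)]
  unfolding opt_p_succ_test_ensemble[OF assms(1,1)] opt_p_succ_test_ensemble[OF assms] by (simp add: field_simps)

theorem theorem6:
  fixes d :: nat and F :: "complex mat set" and \<rho> :: "complex mat"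
  assumes "2 \<le> d"
    and "F \<subseteq> density_ops d"
    and "closed_ops d F"
    and "\<rho> \<in> density_ops d"
    and "\<rho> \<notin> F"
  shows "\<exists>(I :: nat set) (p :: nat \<Rightarrow> real) (k :: nat \<Rightarrow> nat)
            (\<Lambda> :: nat \<Rightarrow> nat \<Rightarrow> complex mat \<Rightarrow> complex mat).
           prob_dist I p \<and>
           (\<forall>m\<in>{2..d}. \<forall>i\<in>I. channel (d ^ m) (k m) (\<Lambda> m i)) \<and>
           (\<exists>c > 1. \<forall>\<sigma>\<in>F.
              c \<le> Max ((\<lambda>m. opt_p_succ I p (\<Lambda> m) (k m) (tensor_pow m \<rho>)
                          / opt_p_succ I p (\<Lambda> m) (k m) (tensor_pow m \<sigma>)) ` {2..d}))"
proof -
  obtain \<delta> where \<delta>: "\<delta> > 0" "\<forall>\<sigma>\<in>F. \<delta> \<le> ic_dist d \<sigma> \<rho>"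
    using ic_dist_bounded_below[OF assms(2-5)] by blast
  define c :: real where "c = 12 / (12 - min \<delta> 1)"
  let ?ratio = "\<lambda>\<sigma> m. opt_p_succ {0,1} (\<lambda>_. 1/2) (test_ensemble d \<rho> m) 2 (tensor_pow m \<rho>)
                       / opt_p_succ {0,1} (\<lambda>_. 1/2) (test_ensemble d \<rho> m) 2 (tensor_pow m \<sigma>)"
  have "c \<le> Max (?ratio \<sigma> ` {2..d})" if "\<sigma> \<in> F" for \<sigma>
  proof -
    have \<sigma>: "\<sigma> \<in> density_ops d"
      using that assms(2) by blast
    have "min \<delta> 1 \<le> ic_dist d \<sigma> \<rho>" "ic_dist d \<sigma> \<rho> \<le> 2"
      using \<delta>(2) that ic_dist_le_2[OF \<sigma> assms(4)] by auto
    then have "c \<le> 12 / (12 - ic_dist d \<sigma> \<rho>)"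
      unfolding c_def by (simp add: field_simps)
    also have "\<dots> = ?ratio \<sigma> 2"
      using opt_p_succ_ratio_test_ensemble[OF assms(4) \<sigma>] by simp
    also have "\<dots> \<le> Max (?ratio \<sigma> ` {2..d})"
      using assms(1) by (intro Max_ge) auto
    finally show ?thesis .
  qed
  moreover have "c > 1"
    using \<delta>(1) by (simp add: c_def field_simps)
  moreover have "prob_dist {0::nat, 1} (\<lambda>_. 1/2)"
    by (simp add: prob_dist_def)
  ultimately show ?thesis
    using channel_test_ensemble[OF assms(4)]
    by (intro exI[of _ "{0::nat, 1}"] exI[of _ "\<lambda>_. 1/2"] exI[of _ "\<lambda>_. 2"] exI[of _ "test_ensemble d \<rho>"]) blast
qed

end
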